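(* Let $\beta,\delta\in(0,1)$, $K>0$, $d_1,d_2>0$, and let $\eta_1,\eta_2\ge0$ be constants. Consider $$\frac{df}{dt}=\tfrac12 fm\beta L-\delta f-\eta_1\frac{f}{f+d_1},\qquad \frac{dm}{dt}=\tfrac12 fm\beta L-\delta m-\eta_2\frac{m}{m+d_2},\qquad L=1-\frac{f+m}{K}.$$ If $\beta K<2\delta+\frac{\eta_1}{K+d_1}+\frac{\eta_2}{K+d_2}$, then the trivial equilibrium $(0,0)$ is globally asymptotically stable.
   Context: $f,m$ are female and male densities, with populations considered in the region $0\le f,m$, $f+m\le K$. The model uses saturating harvesting of both females and males. *)

theory Defs
  imports "HOL-Analysis.Analysis"
begin

definition harvest_field ::
  "real \<Rightarrow> real \<Rightarrow> real \<Rightarrow> real \<Rightarrow> real \<Rightarrow> real \<Rightarrow> real \<Rightarrow> real \<times> real \<Rightarrow> real \<times> real" where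
  "harvest_field \<beta> \<delta> K \<eta>\<^sub>1 \<eta>\<^sub>2 d\<^sub>1 d\<^sub>2 = (\<lambda>(f, m).
     (let L = 1 - (f + m) / K in
      (1/2 * f * m * \<beta> * L - \<delta> * f - \<eta>\<^sub>1 * (f / (f + d\<^sub>1)),
       1/2 * f * m * \<beta> * L - \<delta> * m - \<eta>\<^sub>2 * (m / (m + d\<^sub>2)))))"

definition region :: "real \<Rightarrow> (real \<times> real) set" where
  "region K = {(f, m). 0 \<le> f \<and> 0 \<le> m \<and> f + m \<le> K}"

definition is_solution :: "(real \<times> real \<Rightarrow> real \<times> real) \<Rightarrow> (real \<Rightarrow> real \<times> real) \<Rightarrow> bool" where
  "is_solution F x \<longleftrightarrow>
     (\<forall>t\<ge>0. (x has_vector_derivative F (x t)) (at t within {0..}))"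

definition globally_asymptotically_stable ::
  "(real \<times> real \<Rightarrow> real \<times> real) \<Rightarrow> (real \<times> real) set \<Rightarrow> real \<times> real \<Rightarrow> bool" where
  "globally_asymptotically_stable F D p \<longleftrightarrow>
     F p = 0 \<and>
     (\<forall>\<epsilon>>0. \<exists>\<delta>>0. \<forall>x. is_solution F x \<and> x 0 \<in> D \<and> dist (x 0) p < \<delta> \<longrightarrow>
        (\<forall>t\<ge>0. dist (x t) p < \<epsilon>)) \<and>
     (\<forall>x. is_solution F x \<and> x 0 \<in> D \<longrightarrow> (x \<longlongrightarrow> p) at_top)"

end

theory Submission
  imports Defs
begin

(* The total density V = f + m is a Lyapunov function.  On the region the mating term
   f m beta L is at most (beta K / 4) min f m, while each saturating harvest
   eta u / (u + d) is at least the linear harvest eta u / (K + d); under the threshold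
   the mating term is therefore absorbed by a quarter of the linear losses, giving
   V' <= -(3/4) delta V and exponential decay of V.  The region is forward invariant:
   each density satisfies u' = u g with g bounded above near the zeros of u, so it
   cannot become negative, and V' <= 0 whenever V > K. *)

lemma has_vector_derivative_fst:
  "(x has_vector_derivative v) F \<Longrightarrow> ((\<lambda>t. fst (x t)) has_real_derivative fst v) F"
  unfolding has_vector_derivative_def has_field_derivative_def
  by (drule has_derivative_fst) (simp add: mult_commute_abs)

lemma has_vector_derivative_snd:
  "(x has_vector_derivative v) F \<Longrightarrow> ((\<lambda>t. snd (x t)) has_real_derivative snd v) F"
  unfolding has_vector_derivative_def has_field_derivative_def
  by (drule has_derivative_snd) (simp add: mult_commute_abs)

lemma is_solution_continuous_on:
  assumes "is_solution F x"
  shows "continuous_on {0..} x"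
  using assms unfolding is_solution_def
  by (intro continuous_on_eq_continuous_within[THEN iffD2] ballI
      has_vector_derivative_continuous) auto

lemma is_solution_has_vector_derivative_at:
  assumes "is_solution F x" and "0 < t"
  shows "(x has_vector_derivative F (x t)) (at t)"
proof -
  have "at t within {0..} = at t"
    by (rule at_within_open_subset[of _ "{0<..}"]) (use assms(2) in auto)
  then show ?thesis
    using assms unfolding is_solution_def by (metis less_imp_le)
qed

lemma is_solution_has_real_derivative_components:
  assumes "is_solution F x" and "0 < t"
  shows "((\<lambda>t. fst (x t)) has_real_derivative fst (F (x t))) (at t)"
    and "((\<lambda>t. snd (x t)) has_real_derivative snd (F (x t))) (at t)"
    and "((\<lambda>t. fst (x t) + snd (x t)) has_real_derivative fst (F (x t)) + snd (F (x t))) (at t)"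
  using is_solution_has_vector_derivative_at[OF assms]
  by (auto intro: DERIV_add has_vector_derivative_fst has_vector_derivative_snd)

lemma last_level_crossing:
  fixes u :: "real \<Rightarrow> real"
  assumes "a \<le> b" and cont: "continuous_on {a..b} u" and "u a \<le> c" and "c < u b"
  obtains s where "a \<le> s" "s < b" "u s = c" "\<And>t. s < t \<Longrightarrow> t \<le> b \<Longrightarrow> c < u t"
proof -
  define S where "S = {a..b} \<inter> u -` {..c}"
  have "closed S"
    unfolding S_def by (rule continuous_closed_preimage[OF cont]) auto
  moreover have "S \<noteq> {}" "bdd_above S"
    using assms unfolding S_def by (auto intro: bdd_aboveI[of _ b])
  ultimately have s: "Sup S \<in> S"
    by (rule closed_contains_Sup[rotated -1])
  have above: "c < u t" if "Sup S < t" "t \<le> b" for t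
  proof (rule ccontr)
    assume "\<not> c < u t"
    then have "t \<in> S" using s that unfolding S_def by auto
    then show False using cSup_upper[OF _ \<open>bdd_above S\<close>] that by fastforce
  qed
  have "Sup S \<le> b" "u (Sup S) \<le> c" using s unfolding S_def by auto
  then have "Sup S < b" using \<open>c < u b\<close> by (metis not_less order.antisym)
  moreover have "u (Sup S) = c"
  proof -
    have "continuous_on {Sup S..b} u"
      using cont s unfolding S_def by (auto intro: continuous_on_subset)
    then obtain z where z: "Sup S \<le> z" "z \<le> b" "u z = c"
      using IVT'[of u "Sup S" c b] s assms unfolding S_def by auto
    then have "\<not> Sup S < z" using above by fastforce
    then show ?thesis using z by simp
  qed
  ultimately show ?thesis
    using that s above unfolding S_def by auto
qed

lemma exp_bound_of_deriv_le_linear: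
  fixes u u' :: "real \<Rightarrow> real"
  assumes "a \<le> b" and cont: "continuous_on {a..b} u"
    and deriv: "\<And>t. a < t \<Longrightarrow> t < b \<Longrightarrow> (u has_real_derivative u' t) (at t)"
    and le: "\<And>t. a < t \<Longrightarrow> t < b \<Longrightarrow> u' t \<le> k * u t"
  shows "u b \<le> u a * exp (k * (b - a))"
proof -
  define w where "w t = u t * exp (- k * t)" for t
  have "w b \<le> w a"
  proof (rule DERIV_nonpos_imp_decreasing_open[OF \<open>a \<le> b\<close>])
    fix t assume t: "a < t" "t < b"
    have "(w has_real_derivative (u' t - k * u t) * exp (- k * t)) (at t)"
      unfolding w_def by (rule derivative_eq_intros deriv[OF t] refl | simp add: algebra_simps)+
    moreover have "(u' t - k * u t) * exp (- k * t) \<le> 0"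
      using le[OF t] by (simp add: mult_nonpos_nonneg)
    ultimately show "\<exists>y. (w has_real_derivative y) (at t) \<and> y \<le> 0" by blast
  next
    show "continuous_on {a..b} w"
      unfolding w_def by (intro continuous_intros cont)
  qed
  then have "w b * exp (k * b) \<le> w a * exp (k * b)" by simp
  then show ?thesis
    by (simp add: w_def mult.assoc right_diff_distrib exp_diff flip: exp_add)
qed

lemma nonneg_invariant_of_deriv_mult:
  fixes u g :: "real \<Rightarrow> real"
  assumes cont: "continuous_on {0..} u"
    and deriv: "\<And>t. 0 < t \<Longrightarrow> (u has_real_derivative u t * g t) (at t)"
    and bounded: "\<And>s. 0 \<le> s \<Longrightarrow> u s = 0 \<Longrightarrow> \<exists>M. \<forall>\<^sub>F t in at_right s. g t \<le> M"
    and "0 \<le> u 0" and "0 \<le> t"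
  shows "0 \<le> u t"
proof (rule ccontr)
  assume "\<not> 0 \<le> u t"
  moreover have "continuous_on {0..t} (\<lambda>t. - u t)"
    by (intro continuous_intros continuous_on_subset[OF cont]) auto
  ultimately obtain s where s: "0 \<le> s" "s < t" "u s = 0" and neg: "\<And>r. s < r \<Longrightarrow> r \<le> t \<Longrightarrow> u r < 0"
    using last_level_crossing[of 0 t "\<lambda>t. - u t" 0] assms by auto
  obtain M b where "s < b" and M: "\<And>r. s < r \<Longrightarrow> r < b \<Longrightarrow> g r \<le> M"
    using bounded[OF s(1,3)] unfolding eventually_at_right_field by blast
  define r where "r = min ((s + b) / 2) t"
  have r: "s < r" "r < b" "r \<le> t" using \<open>s < b\<close> \<open>s < t\<close> by (auto simp: r_def min_less_iff_disj)
  \<comment> \<open>Gronwall: \<open>-u\<close> vanishes at \<open>s\<close> and \<open>(-u)' \<le> M * (-u)\<close> on \<open>(s, r)\<close>, so \<open>-u r \<le> 0\<close>.\<close>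
  have "- u r \<le> - u s * exp (M * (r - s))"
  proof (rule exp_bound_of_deriv_le_linear[where u' = "\<lambda>r. - (u r * g r)"])
    show "continuous_on {s..r} (\<lambda>t. - u t)"
      using s by (intro continuous_intros continuous_on_subset[OF cont]) auto
    fix y assume y: "s < y" "y < r"
    show "((\<lambda>t. - u t) has_real_derivative - (u y * g y)) (at y)"
      using y s by (intro DERIV_minus deriv) auto
    have "u y * M \<le> u y * g y"
      using neg[of y] M[of y] y r by (intro mult_left_mono_neg) auto
    then show "- (u y * g y) \<le> M * - u y" by (simp add: mult.commute)
  qed (use r in auto)
  then show False using s neg[OF r(1,3)] by simp
qed

lemma le_invariant_of_deriv_nonpos_above:
  fixes u D :: "real \<Rightarrow> real"
  assumes cont: "continuous_on {0..} u"
    and deriv: "\<And>t. 0 < t \<Longrightarrow> (u has_real_derivative D t) (at t)"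
    and nonpos: "\<And>t. 0 < t \<Longrightarrow> c < u t \<Longrightarrow> D t \<le> 0"
    and "u 0 \<le> c" and "0 \<le> t"
  shows "u t \<le> c"
proof (rule ccontr)
  assume "\<not> u t \<le> c"
  moreover have "continuous_on {0..t} u"
    using cont by (rule continuous_on_subset) auto
  ultimately obtain s where s: "0 \<le> s" "s < t" "u s = c" and above: "\<And>r. s < r \<Longrightarrow> r \<le> t \<Longrightarrow> c < u r"
    using last_level_crossing[of 0 t u c] assms by auto
  have "u t \<le> u s * exp (0 * (t - s))"
  proof (rule exp_bound_of_deriv_le_linear[where u' = D])
    show "continuous_on {s..t} u"
      using cont s by (auto intro: continuous_on_subset)
  qed (use s above deriv nonpos in auto)
  then show False using s above[of t] by simp
qed

lemma globally_asymptotically_stable_of_exp_bound: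
  assumes "F p = 0" and "0 < C" and "0 < c"
    and bound: "\<And>x t. is_solution F x \<Longrightarrow> x 0 \<in> D \<Longrightarrow> 0 \<le> t \<Longrightarrow>
      dist (x t) p \<le> C * dist (x 0) p * exp (- c * t)"
  shows "globally_asymptotically_stable F D p"
  unfolding globally_asymptotically_stable_def
proof (intro conjI allI impI)
  fix \<epsilon> :: real assume "0 < \<epsilon>"
  show "\<exists>\<delta>>0. \<forall>x. is_solution F x \<and> x 0 \<in> D \<and> dist (x 0) p < \<delta> \<longrightarrow> (\<forall>t\<ge>0. dist (x t) p < \<epsilon>)"
  proof (intro exI[of _ "\<epsilon> / C"] conjI allI impI)
    show "0 < \<epsilon> / C" using \<open>0 < \<epsilon>\<close> \<open>0 < C\<close> by simp
  next
    fix x :: "real \<Rightarrow> real \<times> real" and t :: real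
    assume x: "is_solution F x \<and> x 0 \<in> D \<and> dist (x 0) p < \<epsilon> / C" and "0 \<le> t"
    have "dist (x t) p \<le> C * dist (x 0) p * exp (- c * t)"
      by (rule bound) (use x \<open>0 \<le> t\<close> in auto)
    also have "\<dots> \<le> C * dist (x 0) p"
      using \<open>0 < C\<close> \<open>0 < c\<close> \<open>0 \<le> t\<close> by (intro mult_left_le) auto
    also have "\<dots> < \<epsilon>"
      using x \<open>0 < C\<close> by (simp add: field_simps)
    finally show "dist (x t) p < \<epsilon>" .
  qed
next
  fix x :: "real \<Rightarrow> real \<times> real" assume x: "is_solution F x \<and> x 0 \<in> D"
  have "filterlim (\<lambda>t. - (c * t)) at_bot at_top"
    using filterlim_tendsto_pos_mult_at_top[OF tendsto_const \<open>0 < c\<close> filterlim_ident]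
    by (simp only: filterlim_uminus_at_top)
  then have exp_decay: "((\<lambda>t. exp (- c * t)) \<longlongrightarrow> 0) at_top"
    using filterlim_compose[OF exp_at_bot] by simp
  have "((\<lambda>t. dist (x t) p) \<longlongrightarrow> 0) at_top"
  proof (rule tendsto_sandwich[of "\<lambda>_. 0"])
    show "\<forall>\<^sub>F t in at_top. dist (x t) p \<le> C * dist (x 0) p * exp (- c * t)"
      using eventually_ge_at_top[of 0] by eventually_elim (rule bound; use x in auto)
    show "((\<lambda>t. C * dist (x 0) p * exp (- c * t)) \<longlongrightarrow> 0) at_top"
      using exp_decay by (rule tendsto_mult_right_zero)
  qed auto
  then show "(x \<longlongrightarrow> p) at_top"
    by (rule tendsto_dist_iff[THEN iffD2])
qed (fact \<open>F p = 0\<close>)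

definition per_capita_rate :: "real \<Rightarrow> real \<Rightarrow> real \<Rightarrow> real \<Rightarrow> real \<Rightarrow> real \<Rightarrow> real \<Rightarrow> real" where
  "per_capita_rate \<beta> \<delta> K \<eta> d u v = 1/2 * v * \<beta> * (1 - (u + v) / K) - \<delta> - \<eta> / (u + d)"

lemma harvest_field_eq_per_capita:
  "harvest_field \<beta> \<delta> K \<eta>\<^sub>1 \<eta>\<^sub>2 d\<^sub>1 d\<^sub>2 z =
     (fst z * per_capita_rate \<beta> \<delta> K \<eta>\<^sub>1 d\<^sub>1 (fst z) (snd z),
      snd z * per_capita_rate \<beta> \<delta> K \<eta>\<^sub>2 d\<^sub>2 (snd z) (fst z))"
  by (cases z) (simp add: harvest_field_def per_capita_rate_def Let_def algebra_simps)

lemma per_capita_rate_eventually_bounded_above: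
  assumes "(u \<longlongrightarrow> u\<^sub>0) F" and "(v \<longlongrightarrow> v\<^sub>0) F" and "0 \<le> \<eta>" and "- d < u\<^sub>0"
  shows "\<exists>M. \<forall>\<^sub>F t in F. per_capita_rate \<beta> \<delta> K \<eta> d (u t) (v t) \<le> M"
proof -
  define h where "h u v = 1/2 * v * \<beta> * (1 - (u + v) / K)" for u v
  have "((\<lambda>t. h (u t) (v t)) \<longlongrightarrow> h u\<^sub>0 v\<^sub>0) F"
    unfolding h_def divide_inverse by (intro tendsto_intros assms)
  then have "\<forall>\<^sub>F t in F. h (u t) (v t) < h u\<^sub>0 v\<^sub>0 + 1"
    by (rule order_tendstoD) simp
  moreover have "\<forall>\<^sub>F t in F. - d < u t"
    using assms(1,4) by (rule order_tendstoD)
  ultimately have "\<forall>\<^sub>F t in F. per_capita_rate \<beta> \<delta> K \<eta> d (u t) (v t) \<le> h u\<^sub>0 v\<^sub>0 + 1 - \<delta>"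
  proof eventually_elim
    case (elim t)
    then have "0 \<le> \<eta> / (u t + d)" using \<open>0 \<le> \<eta>\<close> by simp
    with elim show ?case unfolding per_capita_rate_def h_def by linarith
  qed
  then show ?thesis by blast
qed

lemma harvest_field_total_rate:
  "fst (harvest_field \<beta> \<delta> K \<eta>\<^sub>1 \<eta>\<^sub>2 d\<^sub>1 d\<^sub>2 (f, m)) + snd (harvest_field \<beta> \<delta> K \<eta>\<^sub>1 \<eta>\<^sub>2 d\<^sub>1 d\<^sub>2 (f, m))
    = \<beta> * (f * m * (1 - (f + m) / K)) - \<delta> * (f + m) - \<eta>\<^sub>1 * (f / (f + d\<^sub>1)) - \<eta>\<^sub>2 * (m / (m + d\<^sub>2))"
  by (simp add: harvest_field_def Let_def algebra_simps)

lemma logistic_product_le_min: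
  fixes K f m :: real
  assumes "0 < K" and "0 \<le> f" and "0 \<le> m"
  shows "f * m * (1 - (f + m) / K) \<le> K / 4 * min f m"
proof -
  have le_quarter: "b * (1 - (a + b) / K) \<le> K / 4" if "0 \<le> a" "0 \<le> b" for a b :: real
  proof -
    have "b * (1 - (a + b) / K) \<le> b * (1 - b / K)"
      using that \<open>0 < K\<close> by (intro mult_left_mono) (auto simp: field_simps)
    also have "\<dots> = K / 4 - (K - 2 * b)\<^sup>2 / (4 * K)"
      using \<open>0 < K\<close> by (simp add: field_simps power2_eq_square)
    also have "\<dots> \<le> K / 4"
      using \<open>0 < K\<close> by simp
    finally show ?thesis .
  qed
  have "f * m * (1 - (f + m) / K) \<le> K / 4 * f"
    using mult_left_mono[OF le_quarter[OF \<open>0 \<le> f\<close> \<open>0 \<le> m\<close>] \<open>0 \<le> f\<close>] by (simp add: ac_simps)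
  moreover have "f * m * (1 - (f + m) / K) \<le> K / 4 * m"
    using mult_left_mono[OF le_quarter[OF \<open>0 \<le> m\<close> \<open>0 \<le> f\<close>] \<open>0 \<le> m\<close>] by (simp add: ac_simps)
  ultimately show ?thesis by (simp add: min_def)
qed

lemma saturating_harvest_ge_linear:
  fixes \<eta> d u K :: real
  assumes "0 \<le> \<eta>" and "0 < d" and "0 \<le> u" and "u \<le> K"
  shows "\<eta> / (K + d) * u \<le> \<eta> * (u / (u + d))"
proof -
  have "u / (K + d) \<le> u / (u + d)"
    using assms by (intro divide_left_mono) auto
  then have "\<eta> * (u / (K + d)) \<le> \<eta> * (u / (u + d))"
    using \<open>0 \<le> \<eta>\<close> by (rule mult_left_mono)
  then show ?thesis by simp
qed

lemma harvest_total_rate_le: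
  fixes \<beta> \<delta> K d\<^sub>1 d\<^sub>2 \<eta>\<^sub>1 \<eta>\<^sub>2 :: real
  assumes "0 \<le> \<beta>" "0 \<le> \<delta>" "0 < K" "0 < d\<^sub>1" "0 < d\<^sub>2" "0 \<le> \<eta>\<^sub>1" "0 \<le> \<eta>\<^sub>2"
    and threshold: "\<beta> * K \<le> 2 * \<delta> + \<eta>\<^sub>1 / (K + d\<^sub>1) + \<eta>\<^sub>2 / (K + d\<^sub>2)"
    and "(f, m) \<in> region K"
  shows "fst (harvest_field \<beta> \<delta> K \<eta>\<^sub>1 \<eta>\<^sub>2 d\<^sub>1 d\<^sub>2 (f, m)) + snd (harvest_field \<beta> \<delta> K \<eta>\<^sub>1 \<eta>\<^sub>2 d\<^sub>1 d\<^sub>2 (f, m))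
    \<le> - (3/4 * \<delta>) * (f + m)"
proof -
  define a where "a = \<eta>\<^sub>1 / (K + d\<^sub>1)"
  define b where "b = \<eta>\<^sub>2 / (K + d\<^sub>2)"
  have fm: "0 \<le> f" "0 \<le> m" "f \<le> K" "m \<le> K"
    using \<open>(f, m) \<in> region K\<close> by (auto simp: region_def)
  have ab: "0 \<le> a" "0 \<le> b"
    using assms by (auto simp: a_def b_def)
  have harvest: "a * f \<le> \<eta>\<^sub>1 * (f / (f + d\<^sub>1))" "b * m \<le> \<eta>\<^sub>2 * (m / (m + d\<^sub>2))"
    unfolding a_def b_def by (rule saturating_harvest_ge_linear; use assms fm in simp)+
  have "\<beta> * (f * m * (1 - (f + m) / K)) \<le> \<beta> * (K / 4 * min f m)"
    using logistic_product_le_min[OF \<open>0 < K\<close> fm(1,2)] \<open>0 \<le> \<beta>\<close> by (rule mult_left_mono)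
  also have "\<dots> = \<beta> * K / 4 * min f m"
    by simp
  also have "\<dots> \<le> (2 * \<delta> + a + b) / 4 * min f m"
    using threshold fm by (intro mult_right_mono divide_right_mono) (auto simp: a_def b_def)
  also have "\<dots> = ((\<delta> + a) * min f m + (\<delta> + b) * min f m) / 4"
    by (simp add: algebra_simps)
  also have "\<dots> \<le> ((\<delta> + a) * f + (\<delta> + b) * m) / 4"
    using ab \<open>0 \<le> \<delta>\<close> by (intro divide_right_mono add_mono mult_left_mono) auto
  also have "\<dots> = (\<delta> * (f + m) + a * f + b * m) / 4"
    by (simp add: algebra_simps)
  finally have mating: "\<beta> * (f * m * (1 - (f + m) / K)) \<le> (\<delta> * (f + m) + a * f + b * m) / 4" .
  define P where "P = \<beta> * (f * m * (1 - (f + m) / K))"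
  define D where "D = \<delta> * (f + m)"
  define X where "X = \<eta>\<^sub>1 * (f / (f + d\<^sub>1))"
  define Y where "Y = \<eta>\<^sub>2 * (m / (m + d\<^sub>2))"
  have "0 \<le> a * f" "0 \<le> b * m"
    using ab fm by auto
  then have "P - D - X - Y \<le> - 3/4 * D"
    using mating harvest unfolding P_def[symmetric] D_def[symmetric] X_def[symmetric] Y_def[symmetric]
    by (simp add: field_simps)
  also have "- 3/4 * D = - (3/4 * \<delta>) * (f + m)"
    by (simp add: D_def)
  finally show ?thesis
    unfolding harvest_field_total_rate P_def D_def X_def Y_def .
qed

lemma harvest_total_rate_nonpos_beyond:
  fixes \<beta> \<delta> K d\<^sub>1 d\<^sub>2 \<eta>\<^sub>1 \<eta>\<^sub>2 :: real
  assumes "0 \<le> \<beta>" "0 \<le> \<delta>" "0 < K" "0 < d\<^sub>1" "0 < d\<^sub>2" "0 \<le> \<eta>\<^sub>1" "0 \<le> \<eta>\<^sub>2"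
    and "0 \<le> f" "0 \<le> m" "K \<le> f + m"
  shows "fst (harvest_field \<beta> \<delta> K \<eta>\<^sub>1 \<eta>\<^sub>2 d\<^sub>1 d\<^sub>2 (f, m)) + snd (harvest_field \<beta> \<delta> K \<eta>\<^sub>1 \<eta>\<^sub>2 d\<^sub>1 d\<^sub>2 (f, m)) \<le> 0"
proof -
  have "\<beta> * (f * m * (1 - (f + m) / K)) \<le> 0"
    using assms by (intro mult_nonneg_nonpos) (auto simp: field_simps)
  moreover have "0 \<le> \<eta>\<^sub>1 * (f / (f + d\<^sub>1))" "0 \<le> \<eta>\<^sub>2 * (m / (m + d\<^sub>2))" "0 \<le> \<delta> * (f + m)"
    using assms by auto
  ultimately show ?thesis
    unfolding harvest_field_total_rate by linarith
qed

lemma harvest_region_invariant: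
  fixes \<beta> \<delta> K d\<^sub>1 d\<^sub>2 \<eta>\<^sub>1 \<eta>\<^sub>2 :: real
  assumes "0 \<le> \<beta>" "0 \<le> \<delta>" "0 < K" "0 < d\<^sub>1" "0 < d\<^sub>2" "0 \<le> \<eta>\<^sub>1" "0 \<le> \<eta>\<^sub>2"
    and sol: "is_solution (harvest_field \<beta> \<delta> K \<eta>\<^sub>1 \<eta>\<^sub>2 d\<^sub>1 d\<^sub>2) x"
    and "x 0 \<in> region K" and "0 \<le> t"
  shows "x t \<in> region K"
proof -
  let ?F = "harvest_field \<beta> \<delta> K \<eta>\<^sub>1 \<eta>\<^sub>2 d\<^sub>1 d\<^sub>2"
  define f where "f t = fst (x t)" for t
  define m where "m t = snd (x t)" for t
  have x_eq: "x t = (f t, m t)" for t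
    by (simp add: f_def m_def)
  have cont: "continuous_on {0..} f" "continuous_on {0..} m"
    using is_solution_continuous_on[OF sol] unfolding f_def m_def by (auto intro: continuous_intros)
  have right_limit: "(g \<longlongrightarrow> g s) (at_right s)" if "continuous_on {0..} g" "0 \<le> s" for g :: "real \<Rightarrow> real" and s
    using that unfolding continuous_on_def by (auto intro: tendsto_within_subset)
  have init: "0 \<le> f 0" "0 \<le> m 0" "f 0 + m 0 \<le> K"
    using \<open>x 0 \<in> region K\<close> by (auto simp: region_def x_eq)
  have deriv: "(f has_real_derivative f \<tau> * per_capita_rate \<beta> \<delta> K \<eta>\<^sub>1 d\<^sub>1 (f \<tau>) (m \<tau>)) (at \<tau>)"
    "(m has_real_derivative m \<tau> * per_capita_rate \<beta> \<delta> K \<eta>\<^sub>2 d\<^sub>2 (m \<tau>) (f \<tau>)) (at \<tau>)"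
    "((\<lambda>t. f t + m t) has_real_derivative fst (?F (f \<tau>, m \<tau>)) + snd (?F (f \<tau>, m \<tau>))) (at \<tau>)"
    if "0 < \<tau>" for \<tau>
    using is_solution_has_real_derivative_components[OF sol that]
    unfolding f_def m_def by (simp_all add: harvest_field_eq_per_capita)
  have nonneg: "0 \<le> f t" "0 \<le> m t" if "0 \<le> t" for t
  proof -
    show "0 \<le> f t"
    proof (rule nonneg_invariant_of_deriv_mult[where u = f and g = "\<lambda>t. per_capita_rate \<beta> \<delta> K \<eta>\<^sub>1 d\<^sub>1 (f t) (m t)"])
      show "\<exists>M. \<forall>\<^sub>F t in at_right s. per_capita_rate \<beta> \<delta> K \<eta>\<^sub>1 d\<^sub>1 (f t) (m t) \<le> M"
        if "0 \<le> s" "f s = 0" for s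
        using per_capita_rate_eventually_bounded_above[OF right_limit[OF cont(1) that(1)]
            right_limit[OF cont(2) that(1)] \<open>0 \<le> \<eta>\<^sub>1\<close>] that(2) \<open>0 < d\<^sub>1\<close>
        by simp
    qed (use cont deriv init that in auto)
    show "0 \<le> m t"
    proof (rule nonneg_invariant_of_deriv_mult[where u = m and g = "\<lambda>t. per_capita_rate \<beta> \<delta> K \<eta>\<^sub>2 d\<^sub>2 (m t) (f t)"])
      show "\<exists>M. \<forall>\<^sub>F t in at_right s. per_capita_rate \<beta> \<delta> K \<eta>\<^sub>2 d\<^sub>2 (m t) (f t) \<le> M"
        if "0 \<le> s" "m s = 0" for s
        using per_capita_rate_eventually_bounded_above[OF right_limit[OF cont(2) that(1)]
            right_limit[OF cont(1) that(1)] \<open>0 \<le> \<eta>\<^sub>2\<close>] that(2) \<open>0 < d\<^sub>2\<close>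
        by simp
    qed (use cont deriv init that in auto)
  qed
  have "f t + m t \<le> K"
  proof (rule le_invariant_of_deriv_nonpos_above[OF _ deriv(3)])
    show "continuous_on {0..} (\<lambda>t. f t + m t)"
      by (intro continuous_intros cont)
    show "fst (?F (f \<tau>, m \<tau>)) + snd (?F (f \<tau>, m \<tau>)) \<le> 0" if "0 < \<tau>" "K < f \<tau> + m \<tau>" for \<tau>
      using that nonneg[of \<tau>] assms by (intro harvest_total_rate_nonpos_beyond) auto
  qed (use init \<open>0 \<le> t\<close> in auto)
  then show ?thesis
    using nonneg \<open>0 \<le> t\<close> by (simp add: region_def x_eq)
qed

lemma harvest_solution_dist_le_exp:
  fixes \<beta> \<delta> K d\<^sub>1 d\<^sub>2 \<eta>\<^sub>1 \<eta>\<^sub>2 :: real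
  assumes params: "0 \<le> \<beta>" "0 \<le> \<delta>" "0 < K" "0 < d\<^sub>1" "0 < d\<^sub>2" "0 \<le> \<eta>\<^sub>1" "0 \<le> \<eta>\<^sub>2"
    and threshold: "\<beta> * K \<le> 2 * \<delta> + \<eta>\<^sub>1 / (K + d\<^sub>1) + \<eta>\<^sub>2 / (K + d\<^sub>2)"
    and sol: "is_solution (harvest_field \<beta> \<delta> K \<eta>\<^sub>1 \<eta>\<^sub>2 d\<^sub>1 d\<^sub>2) x"
    and init: "x 0 \<in> region K" and "0 \<le> t"
  shows "dist (x t) (0, 0) \<le> 2 * dist (x 0) (0, 0) * exp (- (3/4 * \<delta>) * t)"
proof -
  let ?F = "harvest_field \<beta> \<delta> K \<eta>\<^sub>1 \<eta>\<^sub>2 d\<^sub>1 d\<^sub>2"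
  define V where "V t = fst (x t) + snd (x t)" for t
  have region: "x \<tau> \<in> region K" if "0 \<le> \<tau>" for \<tau>
    using harvest_region_invariant[OF params sol init that] .
  have "V t \<le> V 0 * exp (- (3/4 * \<delta>) * (t - 0))"
  proof (rule exp_bound_of_deriv_le_linear[where u' = "\<lambda>\<tau>. fst (?F (x \<tau>)) + snd (?F (x \<tau>))"])
    show "continuous_on {0..t} V"
      unfolding V_def using is_solution_continuous_on[OF sol]
      by (intro continuous_intros) (auto intro: continuous_on_subset)
    show "(V has_real_derivative fst (?F (x \<tau>)) + snd (?F (x \<tau>))) (at \<tau>)" if "0 < \<tau>" for \<tau>
      unfolding V_def using is_solution_has_real_derivative_components(3)[OF sol that] .
    show "fst (?F (x \<tau>)) + snd (?F (x \<tau>)) \<le> - (3/4 * \<delta>) * V \<tau>" if "0 < \<tau>" for \<tau>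
      using harvest_total_rate_le[OF params threshold, of "fst (x \<tau>)" "snd (x \<tau>)"] region[of \<tau>] that
      by (simp add: V_def)
  qed (use \<open>0 \<le> t\<close> in simp)
  then have decay: "V t \<le> V 0 * exp (- (3/4 * \<delta>) * t)"
    by simp
  have "dist (x t) (0, 0) \<le> norm (fst (x t)) + norm (snd (x t))"
    using norm_Pair_le[of "fst (x t)" "snd (x t)"] by (simp add: dist_norm flip: zero_prod_def)
  also have "\<dots> = V t"
    using region[OF \<open>0 \<le> t\<close>] by (auto simp: V_def region_def case_prod_beta)
  also have "\<dots> \<le> V 0 * exp (- (3/4 * \<delta>) * t)"
    by (fact decay)
  also have "\<dots> \<le> 2 * dist (x 0) (0, 0) * exp (- (3/4 * \<delta>) * t)"
  proof (rule mult_right_mono)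
    have "norm (fst (x 0)) \<le> norm (x 0)" "norm (snd (x 0)) \<le> norm (x 0)"
      by (metis norm_fst_le prod.collapse, metis norm_snd_le prod.collapse)
    then show "V 0 \<le> 2 * dist (x 0) (0, 0)"
      by (simp add: V_def dist_norm flip: zero_prod_def)
  qed simp
  finally show ?thesis .
qed

theorem mainTheorem16:
  fixes \<beta> \<delta> K d\<^sub>1 d\<^sub>2 \<eta>\<^sub>1 \<eta>\<^sub>2 :: real
  assumes "0 < \<beta>" "\<beta> < 1" "0 < \<delta>" "\<delta> < 1" "0 < K" "0 < d\<^sub>1" "0 < d\<^sub>2"
    and "0 \<le> \<eta>\<^sub>1" "0 \<le> \<eta>\<^sub>2"
    and "\<beta> * K < 2 * \<delta> + \<eta>\<^sub>1 / (K + d\<^sub>1) + \<eta>\<^sub>2 / (K + d\<^sub>2)"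
  shows "globally_asymptotically_stable (harvest_field \<beta> \<delta> K \<eta>\<^sub>1 \<eta>\<^sub>2 d\<^sub>1 d\<^sub>2) (region K) (0, 0)"
proof (rule globally_asymptotically_stable_of_exp_bound[where C = 2 and c = "3/4 * \<delta>"])
  show "harvest_field \<beta> \<delta> K \<eta>\<^sub>1 \<eta>\<^sub>2 d\<^sub>1 d\<^sub>2 (0, 0) = 0"
    by (simp add: harvest_field_def zero_prod_def)
  show "dist (x t) (0, 0) \<le> 2 * dist (x 0) (0, 0) * exp (- (3/4 * \<delta>) * t)"
    if "is_solution (harvest_field \<beta> \<delta> K \<eta>\<^sub>1 \<eta>\<^sub>2 d\<^sub>1 d\<^sub>2) x" "x 0 \<in> region K" "0 \<le> t" for x t
    using harvest_solution_dist_le_exp[OF _ _ _ _ _ _ _ less_imp_le[OF assms(10)] that] assms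
    by simp
qed (use \<open>0 < \<delta>\<close> in auto)

end
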